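(* Let $\Gamma$ be an immersed, connected, $C^2$ planar curve with total curvature $\int_\Gamma|\kappa|\,ds\le\pi/4$. Then $\mathrm{Ent}[\Gamma]\le\sqrt{2}$.
   Context: $\kappa$ is the signed curvature and $ds$ arc length. For a curve $\Gamma$, $F_{x_0,\lambda}[\Gamma]=\frac{1}{\sqrt{4\pi\lambda}}\int_\Gamma e^{-|x-x_0|^2/(4\lambda)}\,ds$ (integral over the parametrization) and $\mathrm{Ent}[\Gamma]=\sup_{x_0\in\mathbb{R}^2,\lambda>0}F_{x_0,\lambda}[\Gamma]$. *)

theory Defs
  imports "HOL-Analysis.Analysis"
begin

text \<open>Planar curves are modelled as maps into the complex plane, parametrised
by a (possibly unbounded, open or closed) interval I of reals.
g1 and g2 are the first and second derivatives of the parametrisation.\<close>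

definition signed_curvature :: "(real \<Rightarrow> complex) \<Rightarrow> (real \<Rightarrow> complex) \<Rightarrow> real \<Rightarrow> real" where
  "signed_curvature g1 g2 t = Im (cnj (g1 t) * g2 t) / (cmod (g1 t)) ^ 3"

definition total_curvature :: "real set \<Rightarrow> (real \<Rightarrow> complex) \<Rightarrow> (real \<Rightarrow> complex) \<Rightarrow> ennreal" where
  "total_curvature I g1 g2 =
     (\<integral>\<^sup>+ t. ennreal (\<bar>signed_curvature g1 g2 t\<bar> * cmod (g1 t)) * indicator I t \<partial>lborel)"

definition F_functional :: "complex \<Rightarrow> real \<Rightarrow> real set \<Rightarrow> (real \<Rightarrow> complex) \<Rightarrow> (real \<Rightarrow> complex) \<Rightarrow> ennreal" where
  "F_functional x0 lam I g g1 =
     (\<integral>\<^sup>+ t. ennreal (exp (- (cmod (g t - x0))\<^sup>2 / (4 * lam)) * cmod (g1 t) / sqrt (4 * pi * lam))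
              * indicator I t \<partial>lborel)"

definition entropy :: "real set \<Rightarrow> (real \<Rightarrow> complex) \<Rightarrow> (real \<Rightarrow> complex) \<Rightarrow> ennreal" where
  "entropy I g g1 = (SUP p \<in> UNIV \<times> {0<..}. F_functional (fst p) (snd p) I g g1)"

end

theory Submission
  imports Defs "HOL-Probability.Distributions"
begin

text \<open>Writing the unit tangent as \<open>exp (i \<phi>)\<close>, the turning angle between any two tangents
is bounded by the total curvature \<open>\<pi>/4\<close>. Hence every tangent lies in the cone of half-angle
\<open>\<pi>/4\<close> around a fixed unit direction \<open>u\<close>, and the projection \<open>X = \<langle>\<gamma>, u\<rangle>\<close> is a strictly
increasing function of the parameter with \<open>|\<gamma>'| \<le> \<surd>2 X'\<close>. Projection does not increase
distances, so the planar heat kernel at \<open>\<gamma>\<close> is dominated by the one-dimensional Gaussian at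
\<open>X\<close>; substituting \<open>X\<close> as new variable bounds \<open>F\<close> by \<open>\<surd>2\<close> times the mass of a probability
density.\<close>

lemma exp_integral_logarithmic_derivative:
  fixes f f' :: "real \<Rightarrow> complex"
  assumes deriv: "\<And>r. r \<in> {a..b} \<Longrightarrow> (f has_vector_derivative f' r) (at r within {a..b})"
    and cont: "continuous_on {a..b} f'"
    and nonzero: "\<And>r. r \<in> {a..b} \<Longrightarrow> f r \<noteq> 0"
    and t: "t \<in> {a..b}"
  shows "f t = f a * exp (integral {a..t} (\<lambda>r. f' r / f r))"
proof -
  define q where "q r = f' r / f r" for r
  define \<psi> where "\<psi> u = integral {a..u} q" for u
  have "continuous_on {a..b} f"
    using deriv has_vector_derivative_continuous continuous_on_eq_continuous_within by blast
  then have "continuous_on {a..b} q"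
    unfolding q_def using cont nonzero by (intro continuous_on_divide) auto
  then have d\<psi>: "(\<psi> has_vector_derivative q r) (at r within {a..b})" if "r \<in> {a..b}" for r
    unfolding \<psi>_def using integral_has_vector_derivative that by blast
  have "((\<lambda>r. f r * exp (- \<psi> r)) has_vector_derivative 0) (at r within {a..b})"
    if r: "r \<in> {a..b}" for r
  proof -
    have "((\<lambda>r. f r * exp (- \<psi> r)) has_vector_derivative
            f r * (q r * - exp (- \<psi> r)) + f' r * exp (- \<psi> r)) (at r within {a..b})"
      using deriv[OF r] d\<psi>[OF r]
      by (auto intro!: derivative_eq_intros has_vector_derivative_mult
               field_vector_diff_chain_within[where f = \<psi>, unfolded o_def])
    moreover have "f r * (q r * - exp (- \<psi> r)) + f' r * exp (- \<psi> r) = 0"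
      using nonzero[OF r] unfolding q_def by (simp add: field_simps)
    ultimately show ?thesis by simp
  qed
  then obtain c where c: "\<And>r. r \<in> {a..b} \<Longrightarrow> f r * exp (- \<psi> r) = c"
    using has_vector_derivative_zero_constant[of "{a..b}"] by blast
  have "a \<in> {a..b}" using t by auto
  then have "f t * exp (- \<psi> t) = f a"
    using c[OF t] c[of a] by (simp add: \<psi>_def)
  then show ?thesis unfolding \<psi>_def q_def by (simp add: exp_minus field_simps)
qed

lemma abs_Im_logarithmic_derivative:
  assumes "g1 r \<noteq> 0"
  shows "\<bar>Im (g2 r / g1 r)\<bar> = \<bar>signed_curvature g1 g2 r\<bar> * cmod (g1 r)"
proof -
  have "Im (g2 r / g1 r) = Im (cnj (g1 r) * g2 r) / (cmod (g1 r))\<^sup>2"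
    by (subst complex_div_cnj) (simp add: mult.commute)
  moreover have "\<bar>x / n\<^sup>2\<bar> = \<bar>x / n ^ 3\<bar> * n" if "n > 0" for x n :: real
    using that by (simp add: power2_eq_square power3_eq_cube)
  ultimately show ?thesis
    using assms unfolding signed_curvature_def by simp
qed

lemma abs_Im_integral_logarithmic_derivative_le_total_curvature:
  fixes g1 g2 :: "real \<Rightarrow> complex"
  assumes sub: "{a..b} \<subseteq> I"
    and cont: "continuous_on {a..b} (\<lambda>r. g2 r / g1 r)"
    and immersed: "\<And>r. r \<in> I \<Longrightarrow> g1 r \<noteq> 0"
  shows "ennreal \<bar>Im (integral {a..b} (\<lambda>r. g2 r / g1 r))\<bar> \<le> total_curvature I g1 g2"
proof -
  have int_Im: "(\<lambda>r. Im (g2 r / g1 r)) integrable_on {a..b}"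
    and int_abs: "(\<lambda>r. \<bar>Im (g2 r / g1 r)\<bar>) integrable_on {a..b}"
    using cont by (auto intro!: integrable_continuous_interval continuous_on_Im continuous_on_rabs)
  have "Im (integral {a..b} (\<lambda>r. g2 r / g1 r)) = integral {a..b} (\<lambda>r. Im (g2 r / g1 r))"
    using has_integral_Im[OF integrable_integral[OF integrable_continuous_interval[OF cont]]]
    by (simp add: integral_unique)
  then have "\<bar>Im (integral {a..b} (\<lambda>r. g2 r / g1 r))\<bar> \<le> integral {a..b} (\<lambda>r. \<bar>Im (g2 r / g1 r)\<bar>)"
    using integral_norm_bound_integral[OF int_Im int_abs] by simp
  then have "ennreal \<bar>Im (integral {a..b} (\<lambda>r. g2 r / g1 r))\<bar>
      \<le> (\<integral>\<^sup>+ r. ennreal \<bar>Im (g2 r / g1 r)\<bar> * indicator {a..b} r \<partial>lborel)"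
    using nn_integral_has_integral_lebesgue'[OF _ integrable_integral[OF int_abs]]
    by (simp add: ennreal_leI)
  also have "\<dots> \<le> total_curvature I g1 g2"
    unfolding total_curvature_def using sub immersed abs_Im_logarithmic_derivative
    by (intro nn_integral_mono) (auto split: split_indicator)
  finally show ?thesis .
qed

lemma Re_mult_cnj_exp_ge:
  fixes w D :: complex
  assumes "\<bar>Im D\<bar> \<le> \<theta>" "\<theta> \<le> pi"
  shows "cos \<theta> * (cmod (w * exp D) * cmod w) \<le> Re (w * exp D * cnj w)"
proof -
  have "cos \<theta> \<le> cos \<bar>Im D\<bar>"
    using assms by (intro cos_monotone_0_pi_le) auto
  then have "(cmod w)\<^sup>2 * exp (Re D) * cos \<theta> \<le> (cmod w)\<^sup>2 * exp (Re D) * cos (Im D)"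
    by (intro mult_left_mono) auto
  moreover have "Re (w * exp D * cnj w) = ((Re w)\<^sup>2 + (Im w)\<^sup>2) * exp (Re D) * cos (Im D)"
    by (simp add: Re_exp Im_exp power2_eq_square algebra_simps)
  moreover have "cmod (w * exp D) * cmod w = (cmod w)\<^sup>2 * exp (Re D)"
    by (simp add: norm_mult power2_eq_square)
  ultimately show ?thesis by (simp add: cmod_power2 mult_ac)
qed

lemma Re_mult_cnj_tangent_ge:
  fixes g1 g2 :: "real \<Rightarrow> complex"
  assumes interval: "is_interval I"
    and d2: "\<And>t. t \<in> I \<Longrightarrow> (g1 has_vector_derivative g2 t) (at t within I)"
    and c2: "continuous_on I g2"
    and immersed: "\<And>t. t \<in> I \<Longrightarrow> g1 t \<noteq> 0"
    and tc: "total_curvature I g1 g2 \<le> ennreal \<theta>" and \<theta>: "0 \<le> \<theta>" "\<theta> \<le> pi"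
    and s: "s \<in> I" and t: "t \<in> I"
  shows "cos \<theta> * (cmod (g1 t) * cmod (g1 s)) \<le> Re (g1 t * cnj (g1 s))"
proof -
  have ordered: "cos \<theta> * (cmod (g1 t) * cmod (g1 s)) \<le> Re (g1 t * cnj (g1 s))"
    if st: "s \<le> t" "s \<in> I" "t \<in> I" for s t
  proof -
    have sub: "{s..t} \<subseteq> I"
      using mem_is_interval_1_I[OF interval st(2,3)] by auto
    have d2': "(g1 has_vector_derivative g2 r) (at r within {s..t})" if "r \<in> {s..t}" for r
      using d2 sub that has_vector_derivative_within_subset by blast
    have "continuous_on {s..t} g1"
      using d2' has_vector_derivative_continuous continuous_on_eq_continuous_within by blast
    then have cont: "continuous_on {s..t} (\<lambda>r. g2 r / g1 r)"
      using continuous_on_subset[OF c2 sub] sub immersed by (intro continuous_on_divide) auto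
    \<comment> \<open>\<open>Im D\<close> is the turning angle of the tangent from \<open>s\<close> to \<open>t\<close>.\<close>
    define D where "D = integral {s..t} (\<lambda>r. g2 r / g1 r)"
    have g1t: "g1 t = g1 s * exp D"
      unfolding D_def using st sub immersed
      by (intro exp_integral_logarithmic_derivative[OF d2' continuous_on_subset[OF c2 sub]]) auto
    have "ennreal \<bar>Im D\<bar> \<le> ennreal \<theta>"
      unfolding D_def
      using abs_Im_integral_logarithmic_derivative_le_total_curvature[OF sub cont immersed] tc
      by (rule order_trans)
    then have "\<bar>Im D\<bar> \<le> \<theta>"
      using ennreal_le_iff[OF \<theta>(1)] by blast
    then show ?thesis
      using Re_mult_cnj_exp_ge[OF _ \<theta>(2), of D "g1 s"] g1t by simp
  qed
  show ?thesis
  proof (cases "s \<le> t")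
    case True
    then show ?thesis using ordered s t by blast
  next
    case False
    then have "cos \<theta> * (cmod (g1 s) * cmod (g1 t)) \<le> Re (g1 s * cnj (g1 t))"
      using ordered s t by simp
    then show ?thesis by (simp add: mult.commute)
  qed
qed

lemma strict_mono_on_if_derivative_pos:
  fixes X X' :: "real \<Rightarrow> real"
  assumes interval: "is_interval I"
    and deriv: "\<And>t. t \<in> I \<Longrightarrow> (X has_real_derivative X' t) (at t within I)"
    and pos: "\<And>t. t \<in> I \<Longrightarrow> 0 < X' t"
  shows "strict_mono_on I X"
proof (rule strict_mono_onI)
  fix r s assume r: "r \<in> I" and s: "s \<in> I" and "r < s"
  have sub: "{r..s} \<subseteq> I"
    using mem_is_interval_1_I[OF interval r s] by auto
  have "\<exists>x\<in>{r..s}. X s - X r = X' x * (s - r)"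
  proof (rule mvt_very_simple)
    fix x assume "r \<le> x" "x \<le> s"
    then have "x \<in> I"
      using sub by auto
    then show "(X has_derivative (*) (X' x)) (at x within {r..s})"
      using has_field_derivative_subset[OF deriv sub] by (simp add: has_field_derivative_def)
  qed (use \<open>r < s\<close> in simp)
  then obtain x where x: "x \<in> {r..s}" "X s - X r = X' x * (s - r)"
    by auto
  have "0 < X' x * (s - r)"
    using pos sub x(1) \<open>r < s\<close> by auto
  then show "X r < X s"
    using x(2) by linarith
qed

lemma nn_integral_change_of_variables_le:
  fixes f X X' :: "real \<Rightarrow> real"
  assumes S: "S \<in> sets lebesgue"
    and deriv: "\<And>x. x \<in> S \<Longrightarrow> (X has_real_derivative X' x) (at x within S)"
    and inj: "inj_on X S"
    and nonneg: "\<And>y. 0 \<le> f y" and f: "integrable lborel f"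
  shows "(\<integral>\<^sup>+ x. ennreal (\<bar>X' x\<bar> * f (X x)) * indicator S x \<partial>lborel) \<le> ennreal (integral\<^sup>L lborel f)"
proof -
  have "X differentiable_on S"
    unfolding differentiable_on_def differentiable_def using deriv
    by (auto simp: has_field_derivative_def)
  then have XS: "X ` S \<in> sets lebesgue"
    using differentiable_image_in_sets_lebesgue[OF S] by simp
  have "integrable lebesgue f"
    using f by (simp add: integrable_completion)
  then have "f absolutely_integrable_on X ` S"
    unfolding set_integrable_def by (rule integrable_mult_indicator[OF XS])
  then have "((\<lambda>x. \<bar>X' x\<bar> * f (X x)) has_integral integral (X ` S) f) S"
    using has_absolute_integral_change_of_variables_1'[OF S deriv inj, of f "integral (X ` S) f"]
    by (blast intro: has_integral_integrable_integral[THEN iffD2] set_lebesgue_integral_eq_integral(1))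
  then have "(\<integral>\<^sup>+ x. ennreal (\<bar>X' x\<bar> * f (X x)) * indicator S x \<partial>lborel) = ennreal (integral (X ` S) f)"
    using nonneg by (intro nn_integral_has_integral_lebesgue') auto
  also have "integral (X ` S) f \<le> integral UNIV f"
    using \<open>f absolutely_integrable_on X ` S\<close> integrable_on_lborel[OF f] nonneg
    by (intro integral_subset_le) (auto dest: set_lebesgue_integral_eq_integral(1))
  then have "ennreal (integral (X ` S) f) \<le> ennreal (integral\<^sup>L lborel f)"
    using integral_lborel[OF f] by (simp add: ennreal_leI)
  finally show ?thesis .
qed

lemma heat_kernel_le_normal_density:
  fixes lam r y \<mu> :: real
  assumes lam: "0 < lam" and dist: "\<bar>y - \<mu>\<bar> \<le> r"
  shows "exp (- r\<^sup>2 / (4 * lam)) / sqrt (4 * pi * lam) \<le> normal_density \<mu> (sqrt (2 * lam)) y"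
proof -
  have "(y - \<mu>)\<^sup>2 \<le> r\<^sup>2"
    using dist by (metis abs_ge_zero power2_abs power_mono)
  then have "exp (- r\<^sup>2 / (4 * lam)) \<le> exp (- (y - \<mu>)\<^sup>2 / (4 * lam))"
    using lam by (intro exp_mono divide_right_mono) auto
  moreover have "normal_density \<mu> (sqrt (2 * lam)) y = exp (- (y - \<mu>)\<^sup>2 / (4 * lam)) / sqrt (4 * pi * lam)"
    using lam unfolding normal_density_def by (simp add: field_simps)
  ultimately show ?thesis
    using lam by (simp add: divide_right_mono)
qed

lemma F_functional_le_if_tangent_in_cone:
  fixes g g1 :: "real \<Rightarrow> complex" and u :: complex
  assumes interval: "is_interval I"
    and d1: "\<And>t. t \<in> I \<Longrightarrow> (g has_vector_derivative g1 t) (at t within I)"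
    and immersed: "\<And>t. t \<in> I \<Longrightarrow> g1 t \<noteq> 0"
    and u: "cmod u = 1" and C: "0 \<le> C"
    and cone: "\<And>t. t \<in> I \<Longrightarrow> cmod (g1 t) \<le> C * Re (g1 t * u)"
    and lam: "0 < lam"
  shows "F_functional x0 lam I g g1 \<le> ennreal C"
proof -
  define X where "X t = Re (g t * u)" for t
  define X' where "X' t = Re (g1 t * u)" for t
  have pos: "0 < X' t" if "t \<in> I" for t
  proof -
    have "0 < cmod (g1 t)"
      using immersed[OF that] by simp
    then have "0 < C * X' t"
      using cone[OF that] unfolding X'_def by linarith
    then show ?thesis
      using C by (simp add: zero_less_mult_iff)
  qed
  have "bounded_linear (\<lambda>z. Re (z * u))"
    by (rule bounded_linear_compose[OF bounded_linear_Re bounded_linear_mult_left])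
  then have deriv: "(X has_real_derivative X' t) (at t within I)" if "t \<in> I" for t
    using bounded_linear.has_vector_derivative[OF _ d1[OF that]]
    unfolding has_real_derivative_iff_has_vector_derivative X_def X'_def by blast
  have inj: "inj_on X I"
    using strict_mono_on_if_derivative_pos[OF interval deriv pos] strict_mono_on_imp_inj_on by blast
  have I: "I \<in> sets lebesgue"
    using real_interval_borel_measurable[OF interval] by simp
  define \<phi> where "\<phi> = normal_density (Re (x0 * u)) (sqrt (2 * lam))"
  have \<phi>_int: "integrable lborel (\<lambda>y. C * \<phi> y)"
    unfolding \<phi>_def using lam by (intro integrable_mult_right integrable_normal_density) auto
  have \<phi>_total: "integral\<^sup>L lborel (\<lambda>y. C * \<phi> y) = C"
    unfolding \<phi>_def using lam by simp
  have pointwise: "exp (- (cmod (g t - x0))\<^sup>2 / (4 * lam)) * cmod (g1 t) / sqrt (4 * pi * lam)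
      \<le> \<bar>X' t\<bar> * (C * \<phi> (X t))" if t: "t \<in> I" for t
  proof -
    have "X t - Re (x0 * u) = Re ((g t - x0) * u)"
      unfolding X_def by (simp add: algebra_simps)
    then have "\<bar>X t - Re (x0 * u)\<bar> \<le> cmod (g t - x0)"
      using abs_Re_le_cmod[of "(g t - x0) * u"] u by (simp add: norm_mult)
    then have "exp (- (cmod (g t - x0))\<^sup>2 / (4 * lam)) / sqrt (4 * pi * lam) \<le> \<phi> (X t)"
      unfolding \<phi>_def by (rule heat_kernel_le_normal_density[OF lam])
    moreover have "cmod (g1 t) \<le> C * \<bar>X' t\<bar>"
      using cone[OF t] pos[OF t] unfolding X'_def by simp
    ultimately have "exp (- (cmod (g t - x0))\<^sup>2 / (4 * lam)) / sqrt (4 * pi * lam) * cmod (g1 t)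
        \<le> \<phi> (X t) * (C * \<bar>X' t\<bar>)"
      by (intro mult_mono) (auto simp: \<phi>_def)
    then show ?thesis
      by (simp add: mult_ac)
  qed
  have "F_functional x0 lam I g g1
      \<le> (\<integral>\<^sup>+ t. ennreal (\<bar>X' t\<bar> * (C * \<phi> (X t))) * indicator I t \<partial>lborel)"
    unfolding F_functional_def
    using pointwise by (intro nn_integral_mono) (auto split: split_indicator intro: ennreal_leI)
  also have "\<dots> \<le> ennreal (integral\<^sup>L lborel (\<lambda>y. C * \<phi> y))"
    using I deriv inj \<phi>_int C by (intro nn_integral_change_of_variables_le) (auto simp: \<phi>_def)
  finally show ?thesis
    unfolding \<phi>_total .
qed

theorem lemma3p2:
  fixes g g1 g2 :: "real \<Rightarrow> complex" and I :: "real set"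
  assumes interval: "is_interval I" and nonempty: "I \<noteq> {}"
    and d1: "\<And>t. t \<in> I \<Longrightarrow> (g has_vector_derivative g1 t) (at t within I)"
    and d2: "\<And>t. t \<in> I \<Longrightarrow> (g1 has_vector_derivative g2 t) (at t within I)"
    and c2: "continuous_on I g2"
    and immersed: "\<And>t. t \<in> I \<Longrightarrow> g1 t \<noteq> 0"
    and tc: "total_curvature I g1 g2 \<le> ennreal (pi / 4)"
  shows "entropy I g g1 \<le> ennreal (sqrt 2)"
proof -
  obtain s where s: "s \<in> I"
    using nonempty by blast
  define u where "u = cnj (g1 s) / cmod (g1 s)"
  have u: "cmod u = 1"
    unfolding u_def using immersed[OF s] by (simp add: norm_divide)
  have cone: "cmod (g1 t) \<le> sqrt 2 * Re (g1 t * u)" if t: "t \<in> I" for t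
  proof -
    have "sqrt 2 / 2 * (cmod (g1 t) * cmod (g1 s)) \<le> Re (g1 t * cnj (g1 s))"
      using Re_mult_cnj_tangent_ge[OF interval d2 c2 immersed tc _ _ s t] by (simp add: cos_45)
    then have "sqrt 2 / 2 * cmod (g1 t) \<le> Re (g1 t * u)"
      using immersed[OF s] unfolding u_def by (simp add: field_simps)
    then have "sqrt 2 * (sqrt 2 / 2 * cmod (g1 t)) \<le> sqrt 2 * Re (g1 t * u)"
      by (rule mult_left_mono) simp
    moreover have "sqrt 2 * (sqrt 2 / 2 * cmod (g1 t)) = cmod (g1 t)"
      by simp
    ultimately show ?thesis
      by linarith
  qed
  show ?thesis
    unfolding entropy_def
    by (rule SUP_least) (auto intro: F_functional_le_if_tangent_in_cone[OF interval d1 immersed u _ cone])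
qed

end
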